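(* Let $C\subseteq\mathbb{F}_q^n$ be a constant weight linear code. Then the map from the set of subcodes of $C$ to $2^{\{1,\dots,n\}}$ sending a subcode $C'$ to $\mathrm{Supp}(C')$ is injective.
   Context: A subcode is a linear subspace of $C$. For a subcode $D$, $\mathrm{Supp}(D)=\{x\in\{1,\dots,n\}: \exists d\in D,\ d_x\neq0\}$. A constant weight code is a linear code all of whose non-zero codewords have the same number of non-zero coordinates. *)

theory Defs
  imports Main
begin

text \<open>Vectors of F_q^n are functions from a finite index type 'n (with CARD('n) = n)
  to a finite field 'a.\<close>

definition linear_subspace :: "('n \<Rightarrow> 'a::field) set \<Rightarrow> bool" where
  "linear_subspace D \<longleftrightarrow> (\<lambda>_. 0) \<in> D \<and>
     (\<forall>x\<in>D. \<forall>y\<in>D. (\<lambda>i. x i + y i) \<in> D) \<and> (\<forall>c. \<forall>x\<in>D. (\<lambda>i. c * x i) \<in> D)"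

definition subcode :: "('n \<Rightarrow> 'a::field) set \<Rightarrow> ('n \<Rightarrow> 'a) set \<Rightarrow> bool" where
  "subcode D C \<longleftrightarrow> linear_subspace D \<and> D \<subseteq> C"

definition Supp :: "('n \<Rightarrow> 'a::zero) set \<Rightarrow> 'n set" where
  "Supp D = {x. \<exists>d\<in>D. d x \<noteq> 0}"

definition weight :: "('n \<Rightarrow> 'a::zero) \<Rightarrow> nat" where
  "weight c = card {i. c i \<noteq> 0}"

definition constant_weight :: "('n \<Rightarrow> 'a::zero) set \<Rightarrow> bool" where
  "constant_weight C \<longleftrightarrow> (\<forall>c\<in>C. \<forall>d\<in>C. c \<noteq> (\<lambda>_. 0) \<longrightarrow> d \<noteq> (\<lambda>_. 0) \<longrightarrow> weight c = weight d)"

end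

theory Submission
  imports Defs "HOL-Library.Cardinality"
begin

text \<open>Double counting the pairs (codeword, coordinate in its support) of a linear code D over
  \<open>\<bbbF>\<^sub>q\<close> gives \<open>q \<cdot> \<Sum>\<^sub>d wt(d) = |Supp D| (q - 1) |D|\<close>, since every coordinate in the support is
  nonzero on exactly a fraction \<open>(q-1)/q\<close> of the code. For a subcode of a constant weight code
  with nonzero weight \<open>w\<close> the left side is \<open>q w (|D| - 1)\<close>. Hence two nested subcodes
  \<open>D \<subseteq> E\<close> with the same support satisfy the same equation in \<open>|D|\<close> and \<open>|E|\<close>, which has at most
  one solution, so \<open>D = E\<close>. Two arbitrary subcodes with equal supports have the same support as
  their sum, and so both equal it.\<close>

lemma linear_subspace_zero:
  "linear_subspace D \<Longrightarrow> (\<lambda>_. 0) \<in> D"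
  unfolding linear_subspace_def by blast

lemma linear_subspace_add:
  "linear_subspace D \<Longrightarrow> x \<in> D \<Longrightarrow> y \<in> D \<Longrightarrow> (\<lambda>i. x i + y i) \<in> D"
  unfolding linear_subspace_def by blast

lemma linear_subspace_scale:
  "linear_subspace D \<Longrightarrow> x \<in> D \<Longrightarrow> (\<lambda>i. c * x i) \<in> D"
  unfolding linear_subspace_def by blast

lemma linear_subspace_diff:
  assumes "linear_subspace D" "x \<in> D" "y \<in> D"
  shows "(\<lambda>i. x i - y i) \<in> D"
  using linear_subspace_add[OF assms(1,2) linear_subspace_scale[OF assms(1,3), of "-1"]]
  by simp

definition subspace_sum :: "('n \<Rightarrow> 'a::field) set \<Rightarrow> ('n \<Rightarrow> 'a) set \<Rightarrow> ('n \<Rightarrow> 'a) set" where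
  "subspace_sum D E = {\<lambda>i. x i + y i | x y. x \<in> D \<and> y \<in> E}"

lemma subspace_sum_memI:
  "x \<in> D \<Longrightarrow> y \<in> E \<Longrightarrow> (\<lambda>i. x i + y i) \<in> subspace_sum D E"
  unfolding subspace_sum_def by blast

lemma linear_subspace_subspace_sum:
  assumes "linear_subspace D" "linear_subspace E"
  shows "linear_subspace (subspace_sum D E)"
  unfolding linear_subspace_def
proof (intro conjI ballI allI)
  show "(\<lambda>_. 0) \<in> subspace_sum D E"
    using assms by (force simp: subspace_sum_def dest: linear_subspace_zero)
next
  fix a b assume "a \<in> subspace_sum D E" "b \<in> subspace_sum D E"
  then obtain x1 y1 x2 y2 where "x1 \<in> D" "y1 \<in> E" "x2 \<in> D" "y2 \<in> E"
    and "a = (\<lambda>i. x1 i + y1 i)" "b = (\<lambda>i. x2 i + y2 i)"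
    unfolding subspace_sum_def by blast
  moreover have "(\<lambda>i. a i + b i) = (\<lambda>i. (x1 i + x2 i) + (y1 i + y2 i))"
    using calculation by (simp add: algebra_simps)
  ultimately show "(\<lambda>i. a i + b i) \<in> subspace_sum D E"
    using subspace_sum_memI[OF linear_subspace_add[OF assms(1)] linear_subspace_add[OF assms(2)]]
    by simp
next
  fix c a assume "a \<in> subspace_sum D E"
  then obtain x y where "x \<in> D" "y \<in> E" "a = (\<lambda>i. x i + y i)"
    unfolding subspace_sum_def by blast
  moreover have "(\<lambda>i. c * a i) = (\<lambda>i. c * x i + c * y i)"
    using calculation by (simp add: algebra_simps)
  ultimately show "(\<lambda>i. c * a i) \<in> subspace_sum D E"
    using subspace_sum_memI[OF linear_subspace_scale[OF assms(1)] linear_subspace_scale[OF assms(2)]]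
    by simp
qed

lemma subspace_sum_upper1: "linear_subspace E \<Longrightarrow> D \<subseteq> subspace_sum D E"
  unfolding subspace_sum_def by (force dest: linear_subspace_zero)

lemma subspace_sum_upper2: "linear_subspace D \<Longrightarrow> E \<subseteq> subspace_sum D E"
  unfolding subspace_sum_def by (force dest: linear_subspace_zero)

lemma subspace_sum_least:
  "linear_subspace C \<Longrightarrow> D \<subseteq> C \<Longrightarrow> E \<subseteq> C \<Longrightarrow> subspace_sum D E \<subseteq> C"
  unfolding subspace_sum_def by (blast intro: linear_subspace_add)

lemma Supp_mono: "D \<subseteq> E \<Longrightarrow> Supp D \<subseteq> Supp E"
  unfolding Supp_def by blast

lemma Supp_subspace_sum:
  assumes "linear_subspace D" "linear_subspace E"
  shows "Supp (subspace_sum D E) = Supp D \<union> Supp E"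
proof
  show "Supp (subspace_sum D E) \<subseteq> Supp D \<union> Supp E"
    unfolding Supp_def subspace_sum_def by force
  show "Supp D \<union> Supp E \<subseteq> Supp (subspace_sum D E)"
    using Supp_mono[OF subspace_sum_upper1[OF assms(2)]]
      Supp_mono[OF subspace_sum_upper2[OF assms(1)]] by blast
qed

text \<open>Translation by a codeword with \<open>i\<close>-th coordinate \<open>c\<close> maps the codewords vanishing at \<open>i\<close>
  onto those equal to \<open>c\<close> at \<open>i\<close>; such a codeword exists because \<open>i\<close> is in the support.\<close>

lemma card_coordinate_fibre:
  fixes D :: "('n::finite \<Rightarrow> 'a::{finite,field}) set"
  assumes D: "linear_subspace D" and i: "i \<in> Supp D"
  shows "card {d \<in> D. d i = c} = card {d \<in> D. d i = 0}"
proof -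
  obtain e where e: "e \<in> D" "e i \<noteq> 0"
    using i unfolding Supp_def by auto
  define t where "t = (\<lambda>j. (c / e i) * e j)"
  have t: "t \<in> D" "t i = c"
    using linear_subspace_scale[OF D e(1), of "c / e i"] e(2) by (simp_all add: t_def)
  have "bij_betw (\<lambda>x j. x j - t j) {d \<in> D. d i = c} {d \<in> D. d i = 0}"
  proof (rule bij_betw_byWitness[where f' = "\<lambda>x j. x j + t j"])
    show "(\<lambda>x j. x j - t j) ` {d \<in> D. d i = c} \<subseteq> {d \<in> D. d i = 0}"
      using linear_subspace_diff[OF D _ t(1)] t(2) by auto
    show "(\<lambda>x j. x j + t j) ` {d \<in> D. d i = 0} \<subseteq> {d \<in> D. d i = c}"
      using linear_subspace_add[OF D _ t(1)] t(2) by auto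
  qed simp_all
  then show ?thesis
    by (rule bij_betw_same_card)
qed

lemma card_coordinate_nonzero:
  fixes D :: "('n::finite \<Rightarrow> 'a::{finite,field}) set"
  assumes D: "linear_subspace D" and i: "i \<in> Supp D"
  shows "CARD('a) * card {d \<in> D. d i \<noteq> 0} = (CARD('a) - 1) * card D"
proof -
  let ?Z = "{d \<in> D. d i = 0}" and ?N = "{d \<in> D. d i \<noteq> 0}"
  have "card D = (\<Sum>c\<in>UNIV. card {d \<in> D. d i = c})"
    by (subst card_UN_disjoint[symmetric]) (auto intro: arg_cong[where f = card])
  also have "\<dots> = (\<Sum>c\<in>(UNIV :: 'a set). card ?Z)"
    by (rule sum.cong[OF refl]) (rule card_coordinate_fibre[OF D i])
  also have "\<dots> = CARD('a) * card ?Z"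
    by simp
  finally have D_Z: "card D = CARD('a) * card ?Z" .
  have D_NZ: "card D = card ?N + card ?Z"
    by (subst card_Un_disjoint[symmetric]) (auto intro: arg_cong[where f = card])
  have "CARD('a) * card ?N = CARD('a) * card D - CARD('a) * card ?Z"
    using D_NZ by (simp add: algebra_simps)
  also have "\<dots> = (CARD('a) - 1) * card D"
    using D_Z by (simp add: diff_mult_distrib)
  finally show ?thesis .
qed

lemma sum_weight_linear_subspace:
  fixes D :: "('n::finite \<Rightarrow> 'a::{finite,field}) set"
  assumes D: "linear_subspace D"
  shows "CARD('a) * (\<Sum>d\<in>D. weight d) = card (Supp D) * (CARD('a) - 1) * card D"
proof -
  have "(\<Sum>d\<in>D. weight d) = (\<Sum>d\<in>D. \<Sum>i\<in>UNIV. if d i \<noteq> 0 then 1 else 0)"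
    unfolding weight_def by (simp add: sum.If_cases Int_def)
  also have "\<dots> = (\<Sum>i\<in>UNIV. \<Sum>d\<in>D. if d i \<noteq> 0 then 1 else 0)"
    by (rule sum.swap)
  also have "\<dots> = (\<Sum>i\<in>UNIV. card {d \<in> D. d i \<noteq> 0})"
    by (simp add: sum.If_cases Int_def)
  also have "\<dots> = (\<Sum>i\<in>Supp D. card {d \<in> D. d i \<noteq> 0})"
    by (rule sum.mono_neutral_right) (auto simp: Supp_def)
  finally have "CARD('a) * (\<Sum>d\<in>D. weight d)
      = (\<Sum>i\<in>Supp D. CARD('a) * card {d \<in> D. d i \<noteq> 0})"
    by (simp add: sum_distrib_left)
  also have "\<dots> = (\<Sum>i\<in>Supp D. (CARD('a) - 1) * card D)"
    using card_coordinate_nonzero[OF D] by simp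
  finally show ?thesis
    by simp
qed

lemma sum_weight_constant_weight:
  assumes X: "linear_subspace X" "finite X" and C: "X \<subseteq> C" "constant_weight C"
    and e: "e \<in> C" "e \<noteq> (\<lambda>_. 0)"
  shows "(\<Sum>d\<in>X. weight d) = (card X - 1) * weight e"
proof -
  have "(\<Sum>d\<in>X. weight d) = (\<Sum>d\<in>X - {\<lambda>_. 0}. weight d)"
    by (rule sum.mono_neutral_right) (auto simp: X weight_def)
  also have "\<dots> = (\<Sum>d\<in>X - {\<lambda>_. 0}. weight e)"
    using C e unfolding constant_weight_def by (intro sum.cong) blast+
  also have "\<dots> = (card X - 1) * weight e"
    using X linear_subspace_zero[OF X(1)] by simp
  finally show ?thesis .
qed

lemma eq_0_if_mult_pred_eq_mult:
  fixes A B x y :: nat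
  assumes "A * (x - 1) = B * x" "A * (y - 1) = B * y" "1 \<le> x" "x < y"
  shows "A = 0"
proof -
  have x: "int A * (int x - 1) = int B * int x"
    using arg_cong[OF assms(1), of int] assms(3) by (simp add: of_nat_diff)
  have y: "int A * (int y - 1) = int B * int y"
    using arg_cong[OF assms(2), of int] assms(3,4) by (simp add: of_nat_diff)
  have "(int A - int B) * (int y - int x) = 0"
    using x y by (simp add: algebra_simps)
  with assms(4) have "A = B"
    by simp
  with x show ?thesis
    by (simp add: algebra_simps)
qed

lemma subcode_eq_if_Supp_eq:
  fixes D E C :: "('n::finite \<Rightarrow> 'a::{finite,field}) set"
  assumes D: "linear_subspace D" and E: "linear_subspace E"
    and DE: "D \<subseteq> E" and EC: "E \<subseteq> C" and C: "constant_weight C"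
    and Supp_eq: "Supp D = Supp E"
  shows "D = E"
proof (rule ccontr)
  assume "D \<noteq> E"
  with DE obtain e where e: "e \<in> E" "e \<notin> D"
    by blast
  have ne: "e \<noteq> (\<lambda>_. 0)"
    using e(2) linear_subspace_zero[OF D] by auto
  have eC: "e \<in> C"
    using e(1) EC by blast
  let ?q = "CARD('a)" and ?s = "card (Supp E)"
  have "?q * weight e * (card D - 1) = ?s * (?q - 1) * card D"
    using sum_weight_linear_subspace[OF D] Supp_eq DE EC
      sum_weight_constant_weight[OF D _ _ C eC ne]
    by (simp add: algebra_simps)
  moreover have "?q * weight e * (card E - 1) = ?s * (?q - 1) * card E"
    using sum_weight_linear_subspace[OF E] sum_weight_constant_weight[OF E _ EC C eC ne]
    by (simp add: algebra_simps)
  moreover have "1 \<le> card D"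
    using linear_subspace_zero[OF D] by (auto simp: Suc_le_eq card_gt_0_iff)
  moreover have "card D < card E"
    using DE \<open>D \<noteq> E\<close> by (simp add: psubset_card_mono)
  ultimately have "?q * weight e = 0"
    by (rule eq_0_if_mult_pred_eq_mult)
  then have "{i. e i \<noteq> 0} = {}"
    by (simp add: weight_def)
  with ne show False
    by auto
qed

theorem proposition2:
  fixes C :: "('n::finite \<Rightarrow> 'a::{finite,field}) set"
  assumes "linear_subspace C"
    and "constant_weight C"
  shows "inj_on Supp {D. subcode D C}"
proof (rule inj_onI)
  fix D1 D2
  assume "D1 \<in> {D. subcode D C}" "D2 \<in> {D. subcode D C}" and Supp_eq: "Supp D1 = Supp D2"
  then have D1: "linear_subspace D1" "D1 \<subseteq> C" and D2: "linear_subspace D2" "D2 \<subseteq> C"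
    by (simp_all add: subcode_def)
  let ?E = "subspace_sum D1 D2"
  have E: "linear_subspace ?E" "?E \<subseteq> C"
    using linear_subspace_subspace_sum[OF D1(1) D2(1)] subspace_sum_least[OF assms(1) D1(2) D2(2)]
    by simp_all
  have "Supp D1 = Supp ?E" "Supp D2 = Supp ?E"
    unfolding Supp_subspace_sum[OF D1(1) D2(1)] Supp_eq by simp_all
  then have "D1 = ?E" "D2 = ?E"
    using subcode_eq_if_Supp_eq[OF D1(1) E(1) subspace_sum_upper1[OF D2(1)] E(2) assms(2)]
      subcode_eq_if_Supp_eq[OF D2(1) E(1) subspace_sum_upper2[OF D1(1)] E(2) assms(2)]
    by blast+
  then show "D1 = D2"
    by simp
qed

end
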